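(* Let $\mathsf{LTF}^W$ be the class of linear threshold functions $x\mapsto\mathrm{sgn}(w\cdot x+b)$ on $\{0,1\}^n$ with integer weights $w\in\mathbb{Z}^n$ and integer bias $b$ such that the sum of the absolute values of the weights and the bias is at most $W$. Then $\mathsf{LTF}^W$ is distribution-free $\rho$-robustly learnable with access to the example oracle and the $\rho$-local equivalence query oracle, using (a variant of) the Winnow algorithm, with sample complexity $m(n,\epsilon,\delta)=O\left(\frac1\epsilon\left(n+\min\{n,W\}\log(W+n)+\log\frac1\delta\right)\right)$ and local equivalence query complexity $r(n,\epsilon,\delta)=O\left(m(n,\epsilon,\delta)\cdot W^2\log n\right)$.
   Context: $B_\rho(x)$ is the Hamming ball of radius $\rho$ around $x\in\{0,1\}^n$. Robust risk: $\mathsf{R}_\rho(h,c)=\Pr_{x\sim D}[\exists z\in B_\rho(x):h(z)\ne c(z)]$. The example oracle returns $(x,c(x))$, $x\sim D$. Given a sample $S$, the $\rho$-local equivalence query oracle, queried with $(h,x)$ for $x\in S$, either confirms that $h$ and the target $c$ agree on $B_\rho(x)$ or returns $z\in B_\rho(x)$ with $h(z)\ne c(z)$. Robust learnability with sample complexity $m$ and query complexity $r$: for every distribution $D$, target $c$ in the class, and $\epsilon,\delta>0$, using $m$ examples and at most $r$ queries the learner outputs with probability at least $1-\delta$ a hypothesis $h$ with $\mathsf{R}_\rho(h,c)\le\epsilon$. *)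

theory Defs
  imports "HOL-Probability.Probability"
begin

text \<open>Points of the Boolean cube are bool lists of length n; True encodes 1.
  Concepts / hypotheses are predicates on bool lists; the label True encodes +1.\<close>

type_synonym point = "bool list"
type_synonym concept = "point \<Rightarrow> bool"

definition hamming_ball :: "nat \<Rightarrow> point \<Rightarrow> point set" where
  "hamming_ball \<rho> x = {z. length z = length x \<and> card {i. i < length x \<and> z ! i \<noteq> x ! i} \<le> \<rho>}"

definition robust_risk :: "nat \<Rightarrow> point pmf \<Rightarrow> concept \<Rightarrow> concept \<Rightarrow> real" where
  "robust_risk \<rho> D h c = measure_pmf.prob D {x. \<exists>z\<in>hamming_ball \<rho> x. h z \<noteq> c z}"

text \<open>Linear threshold functions with integer weights and bias, total weight at most W;
  sgn(0) = +1 convention.\<close>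
definition ltf_class :: "nat \<Rightarrow> nat \<Rightarrow> concept set" where
  "ltf_class n W = {c. \<exists>(w::nat \<Rightarrow> int) (b::int).
      (\<Sum>i<n. \<bar>w i\<bar>) + \<bar>b\<bar> \<le> int W \<and>
      (\<forall>x. length x = n \<longrightarrow> c x = ((\<Sum>i<n. w i * (if x ! i then 1 else 0)) + b \<ge> 0))}"

datatype move = Query concept point | Output concept

type_synonym transcript = "(concept \<times> point \<times> point option) list"
type_synonym learner = "(point \<times> bool) list \<Rightarrow> transcript \<Rightarrow> move"
type_synonym leq_oracle = "transcript \<Rightarrow> concept \<Rightarrow> point \<Rightarrow> point option"

text \<open>A valid rho-local equivalence query oracle for target c: None = confirmation,
  Some z = counterexample in the ball. It may answer adaptively (depending on the transcript).\<close>
definition valid_leq_oracle :: "nat \<Rightarrow> concept \<Rightarrow> leq_oracle \<Rightarrow> bool" where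
  "valid_leq_oracle \<rho> c Or \<longleftrightarrow> (\<forall>t h x.
      (Or t h x = None \<longrightarrow> (\<forall>z\<in>hamming_ball \<rho> x. h z = c z)) \<and>
      (\<forall>z. Or t h x = Some z \<longrightarrow> z \<in> hamming_ball \<rho> x \<and> h z \<noteq> c z))"

fun run_learner :: "learner \<Rightarrow> (point \<times> bool) list \<Rightarrow> leq_oracle \<Rightarrow> nat \<Rightarrow> transcript \<Rightarrow> concept option" where
  "run_learner L S Or 0 t = (case L S t of Output h \<Rightarrow> Some h | Query _ _ \<Rightarrow> None)"
| "run_learner L S Or (Suc k) t = (case L S t of Output h \<Rightarrow> Some h
     | Query h x \<Rightarrow> (if x \<in> fst ` set S then run_learner L S Or k (t @ [(h, x, Or t h x)]) else None))"

definition learner_succeeds :: "learner \<Rightarrow> nat \<Rightarrow> nat \<Rightarrow> point pmf \<Rightarrow> concept \<Rightarrow> real \<Rightarrow> point list \<Rightarrow> bool" where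
  "learner_succeeds L \<rho> r D c \<epsilon> xs \<longleftrightarrow> (\<forall>Or. valid_leq_oracle \<rho> c Or \<longrightarrow>
      (\<exists>h. run_learner L (map (\<lambda>x. (x, c x)) xs) Or r [] = Some h \<and> robust_risk \<rho> D h c \<le> \<epsilon>))"

definition robustly_learns :: "learner \<Rightarrow> nat \<Rightarrow> concept set \<Rightarrow> nat \<Rightarrow> real \<Rightarrow> real \<Rightarrow> nat \<Rightarrow> nat \<Rightarrow> bool" where
  "robustly_learns L n C \<rho> \<epsilon> \<delta> m r \<longleftrightarrow> (\<forall>D c. set_pmf D \<subseteq> {x. length x = n} \<longrightarrow> c \<in> C \<longrightarrow>
      measure_pmf.prob (replicate_pmf m D) {xs. learner_succeeds L \<rho> r D c \<epsilon> xs} \<ge> 1 - \<delta>)"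

end

theory Submission
  imports Defs
begin

text \<open>Instead of Winnow, the learner runs the halving algorithm on the finite class of threshold
  functions given by integer vectors of total weight at most W; there are at most
  (W + n)^(4 min(n, W)) and at most 2^(2W(n+1)) of them. It queries the majority vote of the
  hypotheses consistent with the transcript at a sample point on whose Hamming ball they still
  disagree. A confirmation settles that point for good, a counterexample eliminates at least half
  of the surviving hypotheses; so after at most m + 2W(n+1) queries every survivor is robustly
  consistent with the sample. By the union bound over the class, with probability at least
  1 - delta no hypothesis of robust risk above epsilon is robustly consistent with m examples.\<close>

section \<open>Robust Occam bound\<close>

lemma emeasure_replicate_pmf_set_subset:
  "emeasure (measure_pmf (replicate_pmf m p)) {xs. set xs \<subseteq> A} = emeasure (measure_pmf p) A ^ m"
proof (induction m)
  case 0
  then show ?case by simp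
next
  case (Suc m)
  have "emeasure (measure_pmf (replicate_pmf (Suc m) p)) {xs. set xs \<subseteq> A}
     = (\<integral>\<^sup>+x. (\<integral>\<^sup>+xs. indicator A x * indicator {xs. set xs \<subseteq> A} xs \<partial>replicate_pmf m p) \<partial>p)"
    by (simp, intro nn_integral_cong) (auto simp: indicator_def)
  also have "\<dots> = (\<integral>\<^sup>+x. indicator A x * emeasure (measure_pmf (replicate_pmf m p)) {xs. set xs \<subseteq> A} \<partial>p)"
    by (simp add: nn_integral_cmult)
  also have "\<dots> = emeasure (measure_pmf p) A * emeasure (measure_pmf (replicate_pmf m p)) {xs. set xs \<subseteq> A}"
    by (simp add: nn_integral_multc)
  finally show ?case
    using Suc by (simp add: mult.commute)
qed

lemma prob_replicate_pmf_set_subset: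
  "measure_pmf.prob (replicate_pmf m p) {xs. set xs \<subseteq> A} = measure_pmf.prob p A ^ m"
  using emeasure_replicate_pmf_set_subset[of m p A]
  by (simp add: measure_pmf.emeasure_eq_measure ennreal_power)

definition agrees_on_ball :: "nat \<Rightarrow> concept \<Rightarrow> concept \<Rightarrow> point \<Rightarrow> bool" where
  "agrees_on_ball \<rho> h c x \<longleftrightarrow> (\<forall>z\<in>hamming_ball \<rho> x. h z = c z)"

lemma robust_risk_eq_1_minus_agrees_on_ball:
  "robust_risk \<rho> D h c = 1 - measure_pmf.prob D {x. agrees_on_ball \<rho> h c x}"
proof -
  have "robust_risk \<rho> D h c = measure_pmf.prob D (UNIV - {x. agrees_on_ball \<rho> h c x})"
    unfolding robust_risk_def agrees_on_ball_def by (rule arg_cong[where f = "measure_pmf.prob D"]) auto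
  then show ?thesis
    using measure_pmf.prob_compl[of "{x. agrees_on_ball \<rho> h c x}" D] by simp
qed

lemma prob_robustly_consistent_bad_hypothesis_le:
  assumes "finite H" and "\<epsilon> \<le> 1"
  shows "measure_pmf.prob (replicate_pmf m D)
      {xs. \<exists>h\<in>H. \<epsilon> < robust_risk \<rho> D h c \<and> (\<forall>x\<in>set xs. agrees_on_ball \<rho> h c x)}
    \<le> real (card H) * (1 - \<epsilon>) ^ m"
proof -
  define Bad where "Bad = {h\<in>H. \<epsilon> < robust_risk \<rho> D h c}"
  define Good where "Good h = {x. agrees_on_ball \<rho> h c x}" for h
  have "{xs. \<exists>h\<in>H. \<epsilon> < robust_risk \<rho> D h c \<and> (\<forall>x\<in>set xs. agrees_on_ball \<rho> h c x)}
      = (\<Union>h\<in>Bad. {xs. set xs \<subseteq> Good h})"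
    by (auto simp: Bad_def Good_def)
  then have "measure_pmf.prob (replicate_pmf m D)
      {xs. \<exists>h\<in>H. \<epsilon> < robust_risk \<rho> D h c \<and> (\<forall>x\<in>set xs. agrees_on_ball \<rho> h c x)}
    \<le> (\<Sum>h\<in>Bad. measure_pmf.prob (replicate_pmf m D) {xs. set xs \<subseteq> Good h})"
    using \<open>finite H\<close> by (simp add: Bad_def measure_pmf.finite_measure_subadditive_finite)
  also have "\<dots> \<le> (\<Sum>h\<in>Bad. (1 - \<epsilon>) ^ m)"
  proof (rule sum_mono)
    fix h assume "h \<in> Bad"
    then have "measure_pmf.prob D (Good h) \<le> 1 - \<epsilon>"
      by (simp add: Bad_def Good_def robust_risk_eq_1_minus_agrees_on_ball)
    then show "measure_pmf.prob (replicate_pmf m D) {xs. set xs \<subseteq> Good h} \<le> (1 - \<epsilon>) ^ m"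
      by (simp add: prob_replicate_pmf_set_subset power_mono)
  qed
  also have "\<dots> \<le> real (card H) * (1 - \<epsilon>) ^ m"
    using \<open>finite H\<close> \<open>\<epsilon> \<le> 1\<close> by (auto simp: Bad_def intro!: mult_right_mono card_mono)
  finally show ?thesis .
qed

section \<open>The halving learner with local equivalence queries\<close>

definition consistent_with :: "nat \<Rightarrow> transcript \<Rightarrow> concept \<Rightarrow> bool" where
  "consistent_with \<rho> t h \<longleftrightarrow> (\<forall>(g, x, a)\<in>set t. case a of
      None \<Rightarrow> agrees_on_ball \<rho> h g x
    | Some z \<Rightarrow> h z \<noteq> g z)"

definition version_space :: "concept set \<Rightarrow> nat \<Rightarrow> transcript \<Rightarrow> concept set" where
  "version_space H \<rho> t = {h\<in>H. consistent_with \<rho> t h}"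

definition majority_vote :: "concept set \<Rightarrow> concept" where
  "majority_vote V z \<longleftrightarrow> card V \<le> 2 * card {h\<in>V. h z}"

definition ambiguous_at :: "nat \<Rightarrow> concept set \<Rightarrow> point \<Rightarrow> bool" where
  "ambiguous_at \<rho> V x \<longleftrightarrow> (\<exists>z\<in>hamming_ball \<rho> x. \<exists>h\<in>V. \<exists>g\<in>V. h z \<noteq> g z)"

definition halving_learner :: "concept set \<Rightarrow> nat \<Rightarrow> learner" where
  "halving_learner H \<rho> S t = (let V = version_space H \<rho> t in
     if \<exists>x\<in>fst ` set S. ambiguous_at \<rho> V x
     then Query (majority_vote V) (SOME x. x \<in> fst ` set S \<and> ambiguous_at \<rho> V x)
     else Output (SOME h. h \<in> V))"

lemma version_space_Nil [simp]: "version_space H \<rho> [] = H"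
  by (simp add: version_space_def consistent_with_def)

lemma version_space_snoc:
  "version_space H \<rho> (t @ [(g, x, a)]) = {h\<in>version_space H \<rho> t. case a of
      None \<Rightarrow> agrees_on_ball \<rho> h g x
    | Some z \<Rightarrow> h z \<noteq> g z}"
  by (cases a) (auto simp: version_space_def consistent_with_def)

lemma card_disagree_majority_vote:
  assumes "finite V"
  shows "2 * card {h\<in>V. h z \<noteq> majority_vote V z} \<le> card V"
proof -
  have "card V = card {h\<in>V. h z} + card {h\<in>V. \<not> h z}"
    using assms by (subst card_Un_disjoint[symmetric]) (auto intro: arg_cong[where f = card])
  then show ?thesis
    by (cases "majority_vote V z") (simp_all add: majority_vote_def)
qed

lemma run_learner_Output: "L S t = Output h \<Longrightarrow> run_learner L S Or k t = Some h"
  by (cases k) simp_all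

lemma halving_learner_Output:
  assumes "h\<^sub>c \<in> version_space H \<rho> t" and "\<forall>x\<in>fst ` set S. agrees_on_ball \<rho> h\<^sub>c c x"
    and "\<not> (\<exists>x\<in>fst ` set S. ambiguous_at \<rho> (version_space H \<rho> t) x)"
  shows "\<exists>h\<in>H. halving_learner H \<rho> S t = Output h \<and> (\<forall>x\<in>fst ` set S. agrees_on_ball \<rho> h c x)"
proof -
  define h where "h = (SOME h. h \<in> version_space H \<rho> t)"
  have h: "h \<in> version_space H \<rho> t"
    unfolding h_def using assms(1) by (rule someI[where P = "\<lambda>h. h \<in> version_space H \<rho> t"])
  have "agrees_on_ball \<rho> h c x" if "x \<in> fst ` set S" for x
    using assms h that unfolding ambiguous_at_def agrees_on_ball_def by metis
  with h assms(3) show ?thesis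
    by (auto simp: halving_learner_def h_def version_space_def)
qed

lemma halving_query_progress:
  fixes H :: "concept set" and \<rho> :: nat and t :: transcript and x :: point and Or :: leq_oracle
  defines "V \<equiv> version_space H \<rho> t"
  defines "t' \<equiv> t @ [(majority_vote V, x, Or t (majority_vote V) x)]"
  assumes valid: "valid_leq_oracle \<rho> c Or" and "finite H"
    and target: "h\<^sub>c \<in> V" "agrees_on_ball \<rho> h\<^sub>c c x"
  shows "h\<^sub>c \<in> version_space H \<rho> t'" and "version_space H \<rho> t' \<subseteq> V"
    and "\<not> ambiguous_at \<rho> (version_space H \<rho> t') x \<or> 2 * card (version_space H \<rho> t') \<le> card V"
proof -
  have "finite V"
    using \<open>finite H\<close> by (simp add: V_def version_space_def)
  have "h\<^sub>c \<in> version_space H \<rho> t' \<and> (\<not> ambiguous_at \<rho> (version_space H \<rho> t') x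
      \<or> 2 * card (version_space H \<rho> t') \<le> card V)"
  proof (cases "Or t (majority_vote V) x")
    case None
    then have V': "version_space H \<rho> t' = {h\<in>V. agrees_on_ball \<rho> h (majority_vote V) x}"
      by (simp add: t'_def V_def version_space_snoc)
    have "agrees_on_ball \<rho> (majority_vote V) c x"
      using valid None by (simp add: valid_leq_oracle_def agrees_on_ball_def)
    then have "h\<^sub>c \<in> version_space H \<rho> t'"
      using target unfolding V' agrees_on_ball_def by simp
    moreover have "\<not> ambiguous_at \<rho> (version_space H \<rho> t') x"
      unfolding V' ambiguous_at_def agrees_on_ball_def by simp
    ultimately show ?thesis by blast
  next
    case (Some z)
    then have "z \<in> hamming_ball \<rho> x" and "majority_vote V z \<noteq> c z"
      using valid by (auto simp: valid_leq_oracle_def)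
    then have "h\<^sub>c z \<noteq> majority_vote V z"
      using target(2) by (auto simp: agrees_on_ball_def)
    moreover have V': "version_space H \<rho> t' = {h\<in>V. h z \<noteq> majority_vote V z}"
      using Some by (simp add: t'_def V_def version_space_snoc)
    ultimately show ?thesis
      using target(1) card_disagree_majority_vote[OF \<open>finite V\<close>] by simp
  qed
  then show "h\<^sub>c \<in> version_space H \<rho> t'"
    and "\<not> ambiguous_at \<rho> (version_space H \<rho> t') x \<or> 2 * card (version_space H \<rho> t') \<le> card V"
    by blast+
  show "version_space H \<rho> t' \<subseteq> V"
    by (auto simp: t'_def V_def version_space_snoc)
qed

text \<open>Here j bounds log2 of the size of the version space and k is the remaining query budget.\<close>
lemma halving_query_decreases_potential:
  fixes H :: "concept set" and \<rho> :: nat and t :: transcript and x :: point and Or :: leq_oracle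
  defines "V \<equiv> version_space H \<rho> t"
  defines "V' \<equiv> version_space H \<rho> (t @ [(majority_vote V, x, Or t (majority_vote V) x)])"
  assumes valid: "valid_leq_oracle \<rho> c Or" and "finite H" and "finite X"
    and x: "x \<in> X" "ambiguous_at \<rho> V x"
    and target: "h\<^sub>c \<in> V" "agrees_on_ball \<rho> h\<^sub>c c x"
    and potential: "card V \<le> 2 ^ j" "card {y\<in>X. ambiguous_at \<rho> V y} + j \<le> Suc k"
  shows "\<exists>j'. card V' \<le> 2 ^ j' \<and> card {y\<in>X. ambiguous_at \<rho> V' y} + j' \<le> k"
proof -
  have "h\<^sub>c \<in> V'" and "V' \<subseteq> V" and progress: "\<not> ambiguous_at \<rho> V' x \<or> 2 * card V' \<le> card V"
    using halving_query_progress[OF valid \<open>finite H\<close> target[unfolded V_def]] by (simp_all add: V_def V'_def)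
  have "finite V" and "finite V'"
    using \<open>finite H\<close> by (simp_all add: V_def V'_def version_space_def)
  have ambiguous_subset: "{y\<in>X. ambiguous_at \<rho> V' y} \<subseteq> {y\<in>X. ambiguous_at \<rho> V y}"
    using \<open>V' \<subseteq> V\<close> by (auto simp: ambiguous_at_def)
  from progress show ?thesis
  proof
    assume "\<not> ambiguous_at \<rho> V' x"
    then have "{y\<in>X. ambiguous_at \<rho> V' y} \<subset> {y\<in>X. ambiguous_at \<rho> V y}"
      using ambiguous_subset x by blast
    then have "card {y\<in>X. ambiguous_at \<rho> V' y} < card {y\<in>X. ambiguous_at \<rho> V y}"
      using \<open>finite X\<close> by (simp add: psubset_card_mono)
    moreover have "card V' \<le> card V"
      using \<open>V' \<subseteq> V\<close> \<open>finite V\<close> by (simp add: card_mono)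
    ultimately show ?thesis
      using potential by (intro exI[of _ j]) simp
  next
    assume halved: "2 * card V' \<le> card V"
    have "1 \<le> card V'"
      using \<open>h\<^sub>c \<in> V'\<close> \<open>finite V'\<close> by (simp add: Suc_le_eq card_gt_0_iff) blast
    with halved potential(1) obtain i where j: "j = Suc i"
      by (cases j) auto
    have "card {y\<in>X. ambiguous_at \<rho> V' y} \<le> card {y\<in>X. ambiguous_at \<rho> V y}"
      using ambiguous_subset \<open>finite X\<close> by (simp add: card_mono)
    then show ?thesis
      using halved potential j by (intro exI[of _ i]) simp
  qed
qed

lemma run_halving_learner:
  assumes valid: "valid_leq_oracle \<rho> c Or" and "finite H"
    and target: "\<forall>x\<in>fst ` set S. agrees_on_ball \<rho> h\<^sub>c c x"
  shows "h\<^sub>c \<in> version_space H \<rho> t \<Longrightarrow> card (version_space H \<rho> t) \<le> 2 ^ j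
    \<Longrightarrow> card {x\<in>fst ` set S. ambiguous_at \<rho> (version_space H \<rho> t) x} + j \<le> k
    \<Longrightarrow> \<exists>h\<in>H. run_learner (halving_learner H \<rho>) S Or k t = Some h
          \<and> (\<forall>x\<in>fst ` set S. agrees_on_ball \<rho> h c x)"
proof (induction k arbitrary: t j)
  case 0
  then have "\<not> (\<exists>x\<in>fst ` set S. ambiguous_at \<rho> (version_space H \<rho> t) x)"
    by auto
  then show ?case
    using halving_learner_Output[OF "0.prems"(1) target] run_learner_Output by metis
next
  case (Suc k)
  define V where "V = version_space H \<rho> t"
  show ?case
  proof (cases "\<exists>x\<in>fst ` set S. ambiguous_at \<rho> V x")
    case False
    then show ?thesis
      using halving_learner_Output[OF Suc.prems(1) target] run_learner_Output by (metis V_def)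
  next
    case True
    define x where "x = (SOME x. x \<in> fst ` set S \<and> ambiguous_at \<rho> V x)"
    have x: "x \<in> fst ` set S" "ambiguous_at \<rho> V x"
      unfolding x_def using someI_ex[OF True[unfolded Bex_def]] by auto
    define t' where "t' = t @ [(majority_vote V, x, Or t (majority_vote V) x)]"
    have run: "run_learner (halving_learner H \<rho>) S Or (Suc k) t = run_learner (halving_learner H \<rho>) S Or k t'"
      using True x(1) by (simp add: halving_learner_def Let_def t'_def x_def V_def)
    have "agrees_on_ball \<rho> h\<^sub>c c x"
      using target x(1) by blast
    then have "h\<^sub>c \<in> version_space H \<rho> t'"
      using halving_query_progress(1)[OF valid \<open>finite H\<close> Suc.prems(1)] by (simp add: t'_def V_def)
    moreover obtain j' where "card (version_space H \<rho> t') \<le> 2 ^ j'"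
      and "card {y\<in>fst ` set S. ambiguous_at \<rho> (version_space H \<rho> t') y} + j' \<le> k"
      using halving_query_decreases_potential[OF valid \<open>finite H\<close> _ x[unfolded V_def] Suc.prems(1)
          \<open>agrees_on_ball \<rho> h\<^sub>c c x\<close> Suc.prems(2,3)]
      by (auto simp: t'_def V_def)
    ultimately show ?thesis
      using Suc.IH run by simp
  qed
qed

lemma halving_learner_robustly_learns:
  assumes "finite H" and "card H \<le> 2 ^ j" and "\<epsilon> \<le> 1"
    and realizable: "\<And>c. c \<in> C \<Longrightarrow> \<exists>h\<in>H. \<forall>z. length z = n \<longrightarrow> h z = c z"
    and "real (card H) * (1 - \<epsilon>) ^ m \<le> \<delta>"
  shows "robustly_learns (halving_learner H \<rho>) n C \<rho> \<epsilon> \<delta> m (m + j)"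
  unfolding robustly_learns_def
proof (intro allI impI)
  fix D :: "point pmf" and c :: concept
  assume D: "set_pmf D \<subseteq> {x. length x = n}" and "c \<in> C"
  then obtain h\<^sub>c where "h\<^sub>c \<in> H" and h\<^sub>c: "\<forall>z. length z = n \<longrightarrow> h\<^sub>c z = c z"
    using realizable by blast
  define Fail where "Fail = {xs. \<not> learner_succeeds (halving_learner H \<rho>) \<rho> (m + j) D c \<epsilon> xs}"
  define Bad where "Bad = {xs. \<exists>h\<in>H. \<epsilon> < robust_risk \<rho> D h c \<and> (\<forall>x\<in>set xs. agrees_on_ball \<rho> h c x)}"
  have "Fail \<inter> set_pmf (replicate_pmf m D) \<subseteq> Bad"
  proof
    fix xs
    assume xs: "xs \<in> Fail \<inter> set_pmf (replicate_pmf m D)"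
    then have "length xs = m" and "set xs \<subseteq> set_pmf D"
      by (auto simp: set_replicate_pmf)
    define S where "S = map (\<lambda>x. (x, c x)) xs"
    from xs have "\<not> learner_succeeds (halving_learner H \<rho>) \<rho> (m + j) D c \<epsilon> xs"
      by (simp add: Fail_def)
    then obtain Or where valid: "valid_leq_oracle \<rho> c Or"
      and no_success: "\<not> (\<exists>h. run_learner (halving_learner H \<rho>) S Or (m + j) [] = Some h
          \<and> robust_risk \<rho> D h c \<le> \<epsilon>)"
      unfolding learner_succeeds_def S_def by blast
    have S: "fst ` set S = set xs"
      by (simp add: S_def image_image)
    have "agrees_on_ball \<rho> h\<^sub>c c x" if "x \<in> fst ` set S" for x
      using h\<^sub>c D \<open>set xs \<subseteq> set_pmf D\<close> that by (auto simp: S agrees_on_ball_def hamming_ball_def)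
    moreover have "card {x\<in>fst ` set S. ambiguous_at \<rho> (version_space H \<rho> []) x} \<le> m"
      using card_mono[of "set xs" "{x\<in>set xs. ambiguous_at \<rho> H x}"] card_length[of xs] \<open>length xs = m\<close>
      by (simp add: S)
    ultimately obtain h where "h \<in> H" and run: "run_learner (halving_learner H \<rho>) S Or (m + j) [] = Some h"
      and "\<forall>x\<in>fst ` set S. agrees_on_ball \<rho> h c x"
      using run_halving_learner[OF valid \<open>finite H\<close>, of S h\<^sub>c "[]" j "m + j"] \<open>h\<^sub>c \<in> H\<close> \<open>card H \<le> 2 ^ j\<close>
      by auto
    moreover have "\<epsilon> < robust_risk \<rho> D h c"
      using no_success run by (simp add: not_le)
    ultimately show "xs \<in> Bad"
      by (auto simp: Bad_def S)
  qed
  then have "measure_pmf.prob (replicate_pmf m D) (Fail \<inter> set_pmf (replicate_pmf m D))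
      \<le> measure_pmf.prob (replicate_pmf m D) Bad"
    by (rule measure_pmf.finite_measure_mono) simp
  then have "measure_pmf.prob (replicate_pmf m D) Fail \<le> measure_pmf.prob (replicate_pmf m D) Bad"
    by (simp add: measure_Int_set_pmf)
  also have "\<dots> \<le> real (card H) * (1 - \<epsilon>) ^ m"
    unfolding Bad_def by (rule prob_robustly_consistent_bad_hypothesis_le[OF \<open>finite H\<close> \<open>\<epsilon> \<le> 1\<close>])
  also note \<open>real (card H) * (1 - \<epsilon>) ^ m \<le> \<delta>\<close>
  finally have "measure_pmf.prob (replicate_pmf m D) Fail \<le> \<delta>" .
  moreover have "measure_pmf.prob (replicate_pmf m D) (UNIV - Fail) = 1 - measure_pmf.prob (replicate_pmf m D) Fail"
    using measure_pmf.prob_compl[of Fail "replicate_pmf m D"] by simp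
  moreover have "UNIV - Fail = {xs. learner_succeeds (halving_learner H \<rho>) \<rho> (m + j) D c \<epsilon> xs}"
    by (auto simp: Fail_def)
  ultimately show "1 - \<delta> \<le> measure_pmf.prob (replicate_pmf m D)
      {xs. learner_succeeds (halving_learner H \<rho>) \<rho> (m + j) D c \<epsilon> xs}"
    by simp
qed

section \<open>Threshold functions with bounded integer weights\<close>

text \<open>The bias is stored as coordinate n of the weight vector.\<close>
definition ltf_eval :: "nat \<Rightarrow> (nat \<Rightarrow> int) \<Rightarrow> concept" where
  "ltf_eval n v x \<longleftrightarrow> 0 \<le> (\<Sum>i<n. v i * (if x ! i then 1 else 0)) + v n"

definition weight_vectors :: "nat \<Rightarrow> nat \<Rightarrow> (nat \<Rightarrow> int) set" where
  "weight_vectors n W = {v. (\<forall>i>n. v i = 0) \<and> (\<Sum>i\<le>n. \<bar>v i\<bar>) \<le> int W}"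

definition ltf_hypotheses :: "nat \<Rightarrow> nat \<Rightarrow> concept set" where
  "ltf_hypotheses n W = ltf_eval n ` weight_vectors n W"

lemma ltf_class_realizable:
  assumes "c \<in> ltf_class n W"
  shows "\<exists>h\<in>ltf_hypotheses n W. \<forall>z. length z = n \<longrightarrow> h z = c z"
proof -
  obtain w b where wb: "(\<Sum>i<n. \<bar>w i\<bar>) + \<bar>b\<bar> \<le> int W"
    "\<forall>x. length x = n \<longrightarrow> c x = ((\<Sum>i<n. w i * (if x ! i then 1 else 0)) + b \<ge> 0)"
    using assms by (auto simp: ltf_class_def)
  define v where "v i = (if i < n then w i else if i = n then b else 0)" for i
  have "(\<Sum>i\<le>n. \<bar>v i\<bar>) = (\<Sum>i<n. \<bar>w i\<bar>) + \<bar>b\<bar>"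
    by (simp add: lessThan_Suc_atMost[symmetric] v_def)
  with wb(1) have "v \<in> weight_vectors n W"
    by (simp add: weight_vectors_def v_def)
  moreover have "(\<Sum>i<n. v i * (if z ! i then 1 else 0)) = (\<Sum>i<n. w i * (if z ! i then 1 else 0))" for z
    by (simp add: v_def)
  then have "ltf_eval n v z = c z" if "length z = n" for z
    using wb(2) that by (simp add: ltf_eval_def v_def)
  ultimately show ?thesis
    unfolding ltf_hypotheses_def by blast
qed

lemma weight_vectors_subset_box:
  "weight_vectors n W \<subseteq> (\<lambda>f i. if i \<le> n then f i else 0) ` (PiE {..n} (\<lambda>_. {-int W..int W}))"
proof
  fix v assume v: "v \<in> weight_vectors n W"
  have "\<bar>v i\<bar> \<le> int W" if "i \<le> n" for i
    using member_le_sum[of i "{..n}" "\<lambda>i. \<bar>v i\<bar>"] v that by (auto simp: weight_vectors_def)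
  then have "v i \<in> {-int W..int W}" if "i \<le> n" for i
    using that by (meson abs_le_iff atLeastAtMost_iff minus_le_iff)
  then have "restrict v {..n} \<in> PiE {..n} (\<lambda>_. {-int W..int W})"
    by auto
  moreover have "v = (\<lambda>i. if i \<le> n then restrict v {..n} i else 0)"
    using v by (auto simp: weight_vectors_def fun_eq_iff)
  ultimately show "v \<in> (\<lambda>f i. if i \<le> n then f i else 0) ` (PiE {..n} (\<lambda>_. {-int W..int W}))"
    by blast
qed

lemma finite_weight_vectors: "finite (weight_vectors n W)"
  by (rule finite_subset[OF weight_vectors_subset_box]) (simp add: finite_PiE)

lemma card_weight_vectors_le_box: "card (weight_vectors n W) \<le> (2 * W + 1) ^ (n + 1)"
proof -
  have "card (weight_vectors n W)
      \<le> card ((\<lambda>f i. if i \<le> n then f i else 0) ` (PiE {..n} (\<lambda>_. {-int W..int W})))"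
    by (rule card_mono[OF _ weight_vectors_subset_box]) (simp add: finite_PiE)
  also have "\<dots> \<le> card (PiE {..n} (\<lambda>_. {-int W..int W}))"
    by (rule card_image_le) (simp add: finite_PiE)
  also have "\<dots> = (2 * W + 1) ^ (n + 1)"
    by (simp add: card_PiE nat_add_distrib nat_mult_distrib)
  finally show ?thesis .
qed

definition signed_unit_vectors :: "nat \<Rightarrow> (nat \<Rightarrow> int) set" where
  "signed_unit_vectors n = insert (\<lambda>_. 0) ((\<lambda>(j, s) i. if i = j then s else 0) ` ({..n} \<times> {1, -1}))"

lemma card_signed_unit_vectors: "card (signed_unit_vectors n) \<le> 2 * n + 3"
proof -
  have "card (signed_unit_vectors n)
      \<le> Suc (card ((\<lambda>(j, s) i. if i = j then (s::int) else 0) ` ({..n} \<times> {1, -1})))"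
    unfolding signed_unit_vectors_def by (simp add: card_insert_if)
  also have "\<dots> \<le> Suc (card ({..n} \<times> {1::int, -1}))"
    using card_image_le[of "{..n} \<times> {1::int, -1}" "\<lambda>(j, s) i. if i = j then s else 0"] by simp
  also have "\<dots> = 2 * n + 3"
    by (simp add: card_cartesian_product)
  finally show ?thesis .
qed

lemma weight_vectors_Suc_subset:
  "weight_vectors n (Suc W) \<subseteq> (\<lambda>(p, u) i. p i + u i) ` (weight_vectors n W \<times> signed_unit_vectors n)"
proof
  fix v assume v: "v \<in> weight_vectors n (Suc W)"
  show "v \<in> (\<lambda>(p, u) i. p i + u i) ` (weight_vectors n W \<times> signed_unit_vectors n)"
  proof (cases "(\<Sum>i\<le>n. \<bar>v i\<bar>) \<le> int W")
    case True
    then have "v \<in> weight_vectors n W"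
      using v by (simp add: weight_vectors_def)
    moreover have "(\<lambda>_. 0) \<in> signed_unit_vectors n"
      by (simp add: signed_unit_vectors_def)
    ultimately show ?thesis
      by (intro image_eqI[of _ _ "(v, \<lambda>_. 0)"]) auto
  next
    case False
    then have "(\<Sum>i\<le>n. \<bar>v i\<bar>) \<noteq> 0"
      by linarith
    then obtain j where "j \<in> {..n}" "\<bar>v j\<bar> \<noteq> 0"
      by (rule sum.not_neutral_contains_not_neutral)
    then have j: "j \<le> n" "v j \<noteq> 0"
      by simp_all
    define p where "p = v(j := v j - sgn (v j))"
    define u where "u i = (if i = j then sgn (v j) else 0)" for i
    have "u \<in> signed_unit_vectors n"
      using j by (force simp: signed_unit_vectors_def u_def sgn_if)
    have "\<bar>p j\<bar> = \<bar>v j\<bar> - 1"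
      using j by (auto simp: p_def sgn_if)
    then have "(\<Sum>i\<le>n. \<bar>p i\<bar>) = (\<Sum>i\<le>n. \<bar>v i\<bar>) - 1"
      using j by (simp add: sum.remove[of "{..n}" j] p_def)
    then have "p \<in> weight_vectors n W"
      using v j by (auto simp: weight_vectors_def p_def)
    moreover have "v = (\<lambda>i. p i + u i)"
      by (auto simp: p_def u_def fun_eq_iff)
    ultimately show ?thesis
      using \<open>u \<in> signed_unit_vectors n\<close> by (intro image_eqI[of _ _ "(p, u)"]) auto
  qed
qed

lemma weight_vectors_0: "weight_vectors n 0 = {\<lambda>_. 0}"
proof -
  have "v = (\<lambda>_. 0)" if v: "v \<in> weight_vectors n 0" for v
  proof
    fix i
    have "(\<Sum>i\<le>n. \<bar>v i\<bar>) = 0"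
      using v by (simp add: weight_vectors_def antisym sum_nonneg)
    then show "v i = 0"
      using v by (cases "i \<le> n") (simp_all add: weight_vectors_def sum_nonneg_eq_0_iff)
  qed
  then show ?thesis
    by (auto simp: weight_vectors_def)
qed

lemma card_weight_vectors_le_steps: "card (weight_vectors n W) \<le> (2 * n + 3) ^ W"
proof (induction W)
  case 0
  then show ?case
    by (simp add: weight_vectors_0)
next
  case (Suc W)
  have "finite (signed_unit_vectors n)"
    by (simp add: signed_unit_vectors_def)
  then have "card (weight_vectors n (Suc W))
      \<le> card ((\<lambda>(p, u) i. p i + u i) ` (weight_vectors n W \<times> signed_unit_vectors n))"
    by (intro card_mono[OF _ weight_vectors_Suc_subset]) (simp add: finite_weight_vectors)
  also have "\<dots> \<le> card (weight_vectors n W \<times> signed_unit_vectors n)"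
    by (rule card_image_le) (simp add: finite_weight_vectors \<open>finite (signed_unit_vectors n)\<close>)
  also have "\<dots> \<le> (2 * n + 3) ^ W * (2 * n + 3)"
    using Suc card_signed_unit_vectors by (simp add: card_cartesian_product mult_mono)
  finally show ?case
    by (simp add: mult.commute)
qed

lemma card_weight_vectors_le_pow2: "card (weight_vectors n W) \<le> 2 ^ (2 * W * (n + 1))"
proof -
  have "2 * W + 1 \<le> 2 ^ (2 * W)"
    using Suc_leI[OF less_exp[of "2 * W"]] by simp
  then have "(2 * W + 1) ^ (n + 1) \<le> (2 ^ (2 * W)) ^ (n + 1)"
    by (rule power_mono) simp
  also have "\<dots> = 2 ^ (2 * W * (n + 1))"
    by (rule power_mult[symmetric])
  finally show ?thesis
    using card_weight_vectors_le_box order_trans by blast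
qed

lemma card_weight_vectors_le:
  assumes "2 \<le> n" and "1 \<le> W"
  shows "card (weight_vectors n W) \<le> (W + n) ^ (4 * min n W)"
proof (cases "n \<le> W")
  case True
  have "2 * W + 1 \<le> (W + n) ^ 2"
    using assms mult_le_mono[of 2 "W + n" "W + n" "W + n"] by (simp add: power2_eq_square)
  then have "(2 * W + 1) ^ (n + 1) \<le> ((W + n) ^ 2) ^ (n + 1)"
    by (rule power_mono) simp
  also have "\<dots> \<le> ((W + n) ^ 2) ^ (2 * n)"
    using assms by (intro power_increasing) auto
  finally show ?thesis
    using True card_weight_vectors_le_box[of n W] by (simp add: power_mult[symmetric] mult.assoc)
next
  case False
  have "(n + 1) * (n + 1) \<le> (W + n) * (W + n)" and "2 * 2 \<le> n * n"
    using assms by (intro mult_le_mono; simp)+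
  then have "2 * n + 3 \<le> (W + n) ^ 2"
    by (simp add: power2_eq_square algebra_simps)
  then have "(2 * n + 3) ^ W \<le> ((W + n) ^ 2) ^ W"
    by (rule power_mono) simp
  also have "\<dots> \<le> ((W + n) ^ 2) ^ (2 * W)"
    using assms by (intro power_increasing) auto
  finally show ?thesis
    using False card_weight_vectors_le_steps[of n W] by (simp add: power_mult[symmetric] mult.assoc)
qed

lemma finite_ltf_hypotheses: "finite (ltf_hypotheses n W)"
  by (simp add: ltf_hypotheses_def finite_weight_vectors)

lemma card_ltf_hypotheses_le: "card (ltf_hypotheses n W) \<le> card (weight_vectors n W)"
  by (simp add: ltf_hypotheses_def card_image_le finite_weight_vectors)

lemma card_ltf_hypotheses_pos: "0 < card (ltf_hypotheses n W)"
proof -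
  have "(\<lambda>_. 0) \<in> weight_vectors n W"
    by (simp add: weight_vectors_def)
  then show ?thesis
    using finite_ltf_hypotheses[of n W] by (auto simp: ltf_hypotheses_def card_gt_0_iff)
qed

lemma ln_card_ltf_hypotheses_le:
  assumes "2 \<le> n" and "1 \<le> W"
  shows "ln (real (card (ltf_hypotheses n W))) \<le> 4 * real (min n W) * ln (real (W + n))"
proof -
  have "real (card (ltf_hypotheses n W)) \<le> real ((W + n) ^ (4 * min n W))"
    using order_trans[OF card_ltf_hypotheses_le card_weight_vectors_le[OF assms]] by (simp only: of_nat_le_iff)
  then have "ln (real (card (ltf_hypotheses n W))) \<le> ln (real ((W + n) ^ (4 * min n W)))"
    using card_ltf_hypotheses_pos[of n W] by (intro ln_mono) simp_all
  then show ?thesis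
    by (simp add: ln_realpow)
qed

section \<open>Sample size and query budget\<close>

lemma mult_one_minus_power_le:
  fixes P \<epsilon> \<delta> :: real
  assumes "1 \<le> P" and "0 \<le> \<epsilon>" and "\<epsilon> \<le> 1" and "0 < \<delta>" and "ln P + ln (1 / \<delta>) \<le> \<epsilon> * m"
  shows "P * (1 - \<epsilon>) ^ m \<le> \<delta>"
proof -
  have "(1 - \<epsilon>) ^ m \<le> exp (- \<epsilon>) ^ m"
    using assms(3) exp_ge_add_one_self[of "- \<epsilon>"] by (intro power_mono) auto
  also have "\<dots> = exp (- (\<epsilon> * m))"
    by (simp add: exp_of_nat_mult[symmetric] algebra_simps)
  also have "\<dots> \<le> exp (- ln P - ln (1 / \<delta>))"
    using assms(5) by simp
  also have "\<dots> = \<delta> / P"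
    using assms(1,4) by (simp add: exp_diff exp_minus field_simps)
  finally show ?thesis
    using assms(1) by (simp add: field_simps)
qed

lemma sample_size_bounds:
  fixes \<epsilon> a b :: real
  assumes "2 \<le> n" and "0 \<le> a" and "0 \<le> b" and "0 < \<epsilon>" and "\<epsilon> < 1"
  defines "m \<equiv> nat \<lceil>(real n + 4 * a + b) / \<epsilon>\<rceil>"
  shows "real n + 4 * a + b \<le> \<epsilon> * m" and "n \<le> m" and "real m \<le> 8 * (1 / \<epsilon>) * (real n + a + b)"
proof -
  define K where "K = real n + 4 * a + b"
  have "0 \<le> K"
    using assms by (simp add: K_def)
  then have "K / \<epsilon> \<le> m" and "m \<le> K / \<epsilon> + 1"
    using assms(4) by (simp_all add: m_def K_def of_nat_ceiling)
  then show "real n + 4 * a + b \<le> \<epsilon> * m"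
    using assms(4) by (simp add: K_def divide_le_eq mult.commute)
  have "real n \<le> K"
    using assms by (simp add: K_def)
  also have "\<dots> \<le> K / \<epsilon>"
    using \<open>0 \<le> K\<close> assms by (simp add: le_divide_eq mult_left_le)
  also note \<open>K / \<epsilon> \<le> m\<close>
  finally show "n \<le> m"
    by simp
  have "1 \<le> real n / \<epsilon>"
    using assms by (simp add: le_divide_eq)
  with \<open>m \<le> K / \<epsilon> + 1\<close> have "real m \<le> (K + real n) / \<epsilon>"
    by (simp add: add_divide_distrib)
  also have "\<dots> \<le> 8 * (real n + a + b) / \<epsilon>"
    using assms by (intro divide_right_mono) (simp_all add: K_def)
  finally show "real m \<le> 8 * (1 / \<epsilon>) * (real n + a + b)"
    by simp
qed

lemma query_budget_le:
  assumes "2 \<le> n" and "1 \<le> W" and "n \<le> m"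
  shows "real (m + 2 * W * (n + 1)) \<le> 8 * real m * (real W)\<^sup>2 * ln (real n)"
proof -
  have "W \<le> W\<^sup>2" and "1 \<le> W\<^sup>2"
    using assms(2) by (simp_all add: power2_eq_square)
  have "2 * W * (n + 1) \<le> 2 * W * (2 * m)"
    using assms by (intro mult_le_mono2) simp
  also have "\<dots> \<le> 4 * (m * W\<^sup>2)"
    using mult_le_mono1[OF \<open>W \<le> W\<^sup>2\<close>, of "4 * m"] by (simp add: ac_simps)
  moreover have "m \<le> m * W\<^sup>2"
    using mult_le_mono2[OF \<open>1 \<le> W\<^sup>2\<close>, of m] by simp
  ultimately have "m + 2 * W * (n + 1) \<le> 5 * (m * W\<^sup>2)"
    by linarith
  then have "real (m + 2 * W * (n + 1)) \<le> 5 * (real m * (real W)\<^sup>2)"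
    by (metis of_nat_le_iff of_nat_mult of_nat_numeral of_nat_power)
  also have "\<dots> \<le> (8 * ln (real n)) * (real m * (real W)\<^sup>2)"
  proof (rule mult_right_mono)
    have "ln 2 \<le> ln (real n)"
      using assms(1) by simp
    then show "5 \<le> 8 * ln (real n)"
      using ln2_ge_two_thirds by linarith
  qed simp
  finally show ?thesis
    by (simp add: algebra_simps)
qed

theorem theorem6p5:
  "\<exists>C>0. \<forall>(n::nat) (W::nat) (\<rho>::nat) (\<epsilon>::real) (\<delta>::real).
     2 \<le> n \<longrightarrow> 1 \<le> W \<longrightarrow> 0 < \<epsilon> \<longrightarrow> \<epsilon> < 1 \<longrightarrow> 0 < \<delta> \<longrightarrow> \<delta> < 1 \<longrightarrow>
     (\<exists>(L::learner) (m::nat) (r::nat).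
        real m \<le> C * (1 / \<epsilon>) * (real n + real (min n W) * ln (real (W + n)) + ln (1 / \<delta>)) \<and>
        real r \<le> C * real m * (real W)^2 * ln (real n) \<and>
        robustly_learns L n (ltf_class n W) \<rho> \<epsilon> \<delta> m r)"
proof (intro exI[of _ "8::real"] conjI allI impI)
  fix n W \<rho> :: nat and \<epsilon> \<delta> :: real
  assume n: "2 \<le> n" and W: "1 \<le> W" and \<epsilon>: "0 < \<epsilon>" "\<epsilon> < 1" and \<delta>: "0 < \<delta>" "\<delta> < 1"
  define H where "H = ltf_hypotheses n W"
  define a where "a = real (min n W) * ln (real (W + n))"
  \<comment> \<open>the summand n forces n \<le> m, which pays for the 2W(n+1) queries of the halving phase\<close>
  define m where "m = nat \<lceil>(real n + 4 * a + ln (1 / \<delta>)) / \<epsilon>\<rceil>"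
  have "0 \<le> a" and "0 \<le> ln (1 / \<delta>)"
    using n \<delta> by (simp_all add: a_def)
  note m = sample_size_bounds[OF n this \<epsilon>, folded m_def]
  have "real (card H) * (1 - \<epsilon>) ^ m \<le> \<delta>"
    using card_ltf_hypotheses_pos[of n W] ln_card_ltf_hypotheses_le[OF n W] m(1) \<epsilon> \<delta>
    by (intro mult_one_minus_power_le) (simp_all add: H_def a_def)
  then have "robustly_learns (halving_learner H \<rho>) n (ltf_class n W) \<rho> \<epsilon> \<delta> m (m + 2 * W * (n + 1))"
    using order_trans[OF card_ltf_hypotheses_le card_weight_vectors_le_pow2] ltf_class_realizable \<epsilon>(2)
    by (intro halving_learner_robustly_learns) (simp_all add: H_def finite_ltf_hypotheses)
  then show "\<exists>L m r. real m \<le> 8 * (1 / \<epsilon>) * (real n + real (min n W) * ln (real (W + n)) + ln (1 / \<delta>))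
      \<and> real r \<le> 8 * real m * (real W)\<^sup>2 * ln (real n) \<and> robustly_learns L n (ltf_class n W) \<rho> \<epsilon> \<delta> m r"
    using m(3) query_budget_le[OF n W m(2)] unfolding a_def by blast
qed (simp)

end
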